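(* Let $X$ be a $T_1$ space and $\mathcal{P}$ an ideal of closed subsets of $X$ containing every singleton subset of $X$. Then $C(X)_\mathcal{P}$ is an Artinian ring if and only if $X$ is finite.
   Context: An ideal of closed subsets of $X$ is a family $\mathcal{P}$ of closed subsets closed under finite unions and under passing to closed subsets. $D_f$ is the set of discontinuity points of $f\in\mathbb{R}^X$; $C(X)_\mathcal{P}=\{f\in\mathbb{R}^X\colon\overline{D_f}\in\mathcal{P}\}$ with pointwise operations. *)

theory Defs
  imports "HOL-Analysis.Analysis" "HOL-Algebra.Ring_Divisibility"
begin

definition closed_ideal :: "'a::topological_space set set \<Rightarrow> bool" where
  "closed_ideal P \<longleftrightarrow>
     (\<forall>A\<in>P. closed A) \<and> {} \<in> P \<and>
     (\<forall>A\<in>P. \<forall>B\<in>P. A \<union> B \<in> P) \<and>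
     (\<forall>A\<in>P. \<forall>B. closed B \<and> B \<subseteq> A \<longrightarrow> B \<in> P)"

definition discont :: "('a::topological_space \<Rightarrow> real) \<Rightarrow> 'a set" where
  "discont f = {x. \<not> (f \<longlongrightarrow> f x) (at x)}"

definition CP :: "'a::topological_space set set \<Rightarrow> ('a \<Rightarrow> real) ring" where
  "CP P = \<lparr>carrier = {f. closure (discont f) \<in> P},
           monoid.mult = (\<lambda>f g x. f x * g x),
           one = (\<lambda>x. 1),
           zero = (\<lambda>x. 0),
           add = (\<lambda>f g x. f x + g x)\<rparr>"

definition artinian_ring :: "('a, 'b) ring_scheme \<Rightarrow> bool" where
  "artinian_ring R \<longleftrightarrow> ring R \<and>
     (\<forall>I :: nat \<Rightarrow> 'a set. (\<forall>n. ideal (I n) R) \<and> (\<forall>n. I (Suc n) \<subseteq> I n)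
        \<longrightarrow> (\<exists>N. \<forall>n\<ge>N. I n = I N))"

end

theory Submission
  imports Defs
begin

text \<open>If \<open>X\<close> is infinite, pick distinct points \<open>x\<^sub>0, x\<^sub>1, \<dots>\<close>; the ideals of functions vanishing
at \<open>x\<^sub>0, \<dots>, x\<^sub>n\<^sub>-\<^sub>1\<close> form a strictly decreasing chain, strictness being witnessed by the
indicator of \<open>{x\<^sub>n}\<close>, which lies in \<open>C(X)\<^sub>P\<close> because its discontinuities lie in \<open>{x\<^sub>n} \<in> P\<close>.
If \<open>X\<close> is finite, it is discrete, so \<open>C(X)\<^sub>P = \<real>\<^sup>X\<close>; there an ideal consists of exactly the
functions supported in the union of the supports of its members, so a decreasing chain
of ideals stabilises as soon as this chain of subsets of \<open>X\<close> does.\<close>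

lemma CP_simps:
  "carrier (CP P) = {f. closure (discont f) \<in> P}"
  "f \<otimes>\<^bsub>CP P\<^esub> g = (\<lambda>x. f x * g x)"
  "f \<oplus>\<^bsub>CP P\<^esub> g = (\<lambda>x. f x + g x)"
  "\<one>\<^bsub>CP P\<^esub> = (\<lambda>x. 1)"
  "\<zero>\<^bsub>CP P\<^esub> = (\<lambda>x. 0)"
  by (simp_all add: CP_def)

lemma CP_a_inv:
  assumes "ring (CP P)" and "f \<in> carrier (CP P)"
  shows "\<ominus>\<^bsub>CP P\<^esub> f = (\<lambda>x. - f x)"
proof -
  have "\<ominus>\<^bsub>CP P\<^esub> f \<oplus>\<^bsub>CP P\<^esub> f = \<zero>\<^bsub>CP P\<^esub>"
    using assms by (simp add: ring.ring_simprules(9))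
  then have "(\<ominus>\<^bsub>CP P\<^esub> f) x + f x = 0" for x
    by (metis CP_simps(3,5))
  then show ?thesis by (simp add: fun_eq_iff eq_neg_iff_add_eq_0)
qed

lemma ideal_vanishing_CP:
  assumes R: "ring (CP P)"
  shows "ideal {f \<in> carrier (CP P). \<forall>x\<in>A. f x = 0} (CP P)"
proof (rule idealI[OF R])
  interpret ring "CP P" by (rule R)
  let ?V = "{f \<in> carrier (CP P). \<forall>x\<in>A. f x = 0}"
  show "subgroup ?V (add_monoid (CP P))"
  proof (rule add.subgroupI)
    show "?V \<noteq> {}"
      using zero_closed by (auto simp: CP_simps(5))
    show "\<ominus>\<^bsub>CP P\<^esub> f \<in> ?V" if "f \<in> ?V" for f
      using that a_inv_closed[of f] by (simp add: CP_a_inv[OF R])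
    show "f \<oplus>\<^bsub>CP P\<^esub> g \<in> ?V" if "f \<in> ?V" and "g \<in> ?V" for f g
      using that a_closed[of f g] by (simp add: CP_simps(3))
  qed auto
  show "g \<otimes>\<^bsub>CP P\<^esub> f \<in> ?V" and "f \<otimes>\<^bsub>CP P\<^esub> g \<in> ?V"
    if "f \<in> ?V" and "g \<in> carrier (CP P)" for f g
    using that m_closed[of f g] m_closed[of g f] by (simp_all add: CP_simps(2))
qed

lemma discont_indicator_singleton:
  "discont (indicator {x} :: 'a::t1_space \<Rightarrow> real) \<subseteq> {x}"
proof
  fix y assume y: "y \<in> discont (indicator {x} :: 'a \<Rightarrow> real)"
  show "y \<in> {x}"
  proof (rule ccontr)
    assume "y \<notin> {x}"
    then have "\<forall>\<^sub>F z in at y. (indicator {x} z :: real) = indicator {x} y"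
      by (auto simp: eventually_at_topological intro!: exI[of _ "- {x}"])
    then have "((indicator {x} :: 'a \<Rightarrow> real) \<longlongrightarrow> indicator {x} y) (at y)"
      by (rule tendsto_eventually)
    with y show False by (simp add: discont_def)
  qed
qed

lemma indicator_singleton_in_CP:
  assumes "closed_ideal P" and "{x} \<in> P"
  shows "(indicator {x} :: 'a::t1_space \<Rightarrow> real) \<in> carrier (CP P)"
proof -
  have "closure (discont (indicator {x} :: 'a \<Rightarrow> real)) \<subseteq> {x}"
    using discont_indicator_singleton by (intro closure_minimal) auto
  with assms show ?thesis
    unfolding CP_simps(1) closed_ideal_def mem_Collect_eq by (meson closed_closure)
qed

lemma not_artinian_CP_if_infinite:
  fixes P :: "'a::t1_space set set"
  assumes "closed_ideal P" and "\<And>x. {x} \<in> P" and "infinite (UNIV :: 'a set)"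
  shows "\<not> artinian_ring (CP P)"
proof
  assume artinian: "artinian_ring (CP P)"
  obtain x :: "nat \<Rightarrow> 'a" where x: "inj x"
    using assms(3) infinite_countable_subset by blast
  define I where "I n = {f \<in> carrier (CP P). \<forall>y\<in>x ` {..<n}. f y = 0}" for n
  have "ideal (I n) (CP P)" for n
    unfolding I_def using artinian ideal_vanishing_CP artinian_ring_def by blast
  moreover have "I (Suc n) \<subseteq> I n" for n
    by (auto simp: I_def)
  ultimately obtain N where N: "\<forall>n\<ge>N. I n = I N"
    using artinian unfolding artinian_ring_def by blast
  have "indicator {x N} \<in> I N"
    using indicator_singleton_in_CP[OF assms(1,2)] x by (auto simp: I_def inj_eq)
  moreover have "indicator {x N} \<notin> I (Suc N)"
  proof -
    have "x N \<in> x ` {..<Suc N}" and "indicator {x N} (x N) \<noteq> (0::real)"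
      by auto
    then show ?thesis unfolding I_def by blast
  qed
  ultimately show False
    using N[rule_format, of "Suc N"] by simp
qed

lemma discont_finite_t1_space:
  fixes f :: "'a::t1_space \<Rightarrow> real"
  assumes "finite (UNIV :: 'a set)"
  shows "discont f = {}"
proof -
  have "at x = bot" for x :: 'a
    using trivial_limit_within[of x UNIV] islimpt_finite[OF assms] by simp
  then show ?thesis by (simp add: discont_def)
qed

lemma carrier_CP_finite:
  fixes P :: "'a::t1_space set set"
  assumes "closed_ideal P" and "finite (UNIV :: 'a set)"
  shows "carrier (CP P) = UNIV"
  using assms discont_finite_t1_space[OF assms(2)] by (auto simp: CP_simps closed_ideal_def)

lemma ring_CP_finite:
  fixes P :: "'a::t1_space set set"
  assumes "closed_ideal P" and "finite (UNIV :: 'a set)"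
  shows "ring (CP P)"
proof (rule ringI)
  note carrier = carrier_CP_finite[OF assms]
  have "\<exists>g. (\<lambda>x. f x + g x) = (\<lambda>x. 0)" for f :: "'a \<Rightarrow> real"
    by (intro exI[of _ "\<lambda>x. - f x"]) simp
  then show "abelian_group (CP P)"
    by (intro abelian_groupI) (simp_all add: carrier CP_simps(2-5) algebra_simps)
  show "monoid (CP P)"
    by (rule monoidI) (simp_all add: carrier CP_simps(2-5) mult.assoc)
qed (simp_all add: CP_simps algebra_simps)

definition ideal_support :: "('a \<Rightarrow> real) set \<Rightarrow> 'a set" where
  "ideal_support I = {x. \<exists>g\<in>I. g x \<noteq> 0}"

lemma mem_ideal_if_support_subset:
  assumes I: "ideal I (CP P)" and carrier: "carrier (CP P) = UNIV"
    and "finite F" and "F \<subseteq> ideal_support I" and "\<And>y. f y \<noteq> 0 \<Longrightarrow> y \<in> F"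
  shows "f \<in> I"
  using assms(3-5)
proof (induction F arbitrary: f rule: finite_induct)
  case empty
  then have "f = \<zero>\<^bsub>CP P\<^esub>" by (auto simp: CP_simps)
  then show ?case using I by (simp add: additive_subgroup.zero_closed ideal.axioms(1))
next
  case (insert x F)
  obtain g where g: "g \<in> I" "g x \<noteq> 0"
    using insert.prems by (auto simp: ideal_support_def)
  define h where "h = f(x := 0)"
  define c where "c = (\<lambda>y. if y = x then f x / g x else 0)"
  have "h y \<noteq> 0 \<Longrightarrow> y \<in> F" for y
    using insert.prems(2)[of y] by (auto simp: h_def split: if_splits)
  then have "h \<in> I"
    using insert.IH insert.prems(1) by blast
  moreover have "c \<otimes>\<^bsub>CP P\<^esub> g \<in> I"
    using I g carrier by (intro ideal.I_l_closed) auto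
  ultimately have "h \<oplus>\<^bsub>CP P\<^esub> (c \<otimes>\<^bsub>CP P\<^esub> g) \<in> I"
    using I by (meson additive_subgroup.a_closed ideal.axioms(1))
  moreover have "h \<oplus>\<^bsub>CP P\<^esub> (c \<otimes>\<^bsub>CP P\<^esub> g) = f"
    using g by (auto simp: CP_simps h_def c_def)
  ultimately show ?case by simp
qed

lemma ideal_eq_supported_functions:
  fixes P :: "'a::t1_space set set"
  assumes "closed_ideal P" and "finite (UNIV :: 'a set)" and "ideal I (CP P)"
  shows "I = {f. \<forall>y. f y \<noteq> 0 \<longrightarrow> y \<in> ideal_support I}"
proof
  show "I \<subseteq> {f. \<forall>y. f y \<noteq> 0 \<longrightarrow> y \<in> ideal_support I}"
    by (auto simp: ideal_support_def)
  show "{f. \<forall>y. f y \<noteq> 0 \<longrightarrow> y \<in> ideal_support I} \<subseteq> I"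
  proof
    fix f :: "'a \<Rightarrow> real" assume "f \<in> {f. \<forall>y. f y \<noteq> 0 \<longrightarrow> y \<in> ideal_support I}"
    then show "f \<in> I"
      using assms(2) carrier_CP_finite[OF assms(1,2)]
      by (intro mem_ideal_if_support_subset[OF assms(3), of "{y. f y \<noteq> 0}"]) (auto intro: rev_finite_subset)
  qed
qed

lemma decseq_finite_stabilises:
  assumes "decseq A" and "finite (A 0)"
  shows "\<exists>N. \<forall>n\<ge>N. A n = A N"
proof -
  obtain N where N: "\<And>n. card (A N) \<le> card (A n)"
    using ex_has_least_nat[of "\<lambda>n. True" 0 "\<lambda>n. card (A n)"] by blast
  have "A n = A N" if "N \<le> n" for n
  proof -
    have sub: "A n \<subseteq> A N" using \<open>decseq A\<close> that by (rule decseqD)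
    have fin: "finite (A N)" using finite_subset[OF decseqD[OF \<open>decseq A\<close> le0] assms(2)] .
    have "card (A n) = card (A N)" using N[of n] card_mono[OF fin sub] by linarith
    with fin sub show ?thesis by (rule card_subset_eq)
  qed
  then show ?thesis by blast
qed

lemma artinian_CP_if_finite:
  fixes P :: "'a::t1_space set set"
  assumes "closed_ideal P" and "finite (UNIV :: 'a set)"
  shows "artinian_ring (CP P)"
  unfolding artinian_ring_def
proof (intro conjI allI impI)
  show "ring (CP P)" using ring_CP_finite[OF assms] .
  fix I :: "nat \<Rightarrow> ('a \<Rightarrow> real) set"
  assume "(\<forall>n. ideal (I n) (CP P)) \<and> (\<forall>n. I (Suc n) \<subseteq> I n)"
  then have ideals: "\<And>n. ideal (I n) (CP P)" and chain: "\<And>n. I (Suc n) \<subseteq> I n"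
    by auto
  have "decseq (\<lambda>n. ideal_support (I n))"
    unfolding decseq_Suc_iff ideal_support_def using chain by blast
  then obtain N where N: "\<forall>n\<ge>N. ideal_support (I n) = ideal_support (I N)"
    using decseq_finite_stabilises[OF _ finite_subset[OF subset_UNIV assms(2)]] by blast
  have "I n = I N" if "N \<le> n" for n
  proof -
    have "I n = {f. \<forall>y. f y \<noteq> 0 \<longrightarrow> y \<in> ideal_support (I n)}"
      using ideal_eq_supported_functions[OF assms ideals] .
    also have "\<dots> = {f. \<forall>y. f y \<noteq> 0 \<longrightarrow> y \<in> ideal_support (I N)}"
      using N[rule_format, OF that] by simp
    also have "\<dots> = I N"
      using ideal_eq_supported_functions[OF assms ideals, symmetric] .
    finally show ?thesis .
  qed
  then show "\<exists>N. \<forall>n\<ge>N. I n = I N" by blast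
qed

theorem corollary5p10:
  fixes P :: "'a::t1_space set set"
  assumes "closed_ideal P"
    and "\<And>x. {x} \<in> P"
  shows "artinian_ring (CP P) \<longleftrightarrow> finite (UNIV :: 'a set)"
  using not_artinian_CP_if_infinite[OF assms] artinian_CP_if_finite[OF assms(1)] by blast

end
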